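(* Let $C \geq 1$ and $\mathbf{C}_{\mathrm{lip}} \geq 1$. There exist $\alpha_0 > 0$ and $c > 0$, depending only on $C$ and $\mathbf{C}_{\mathrm{lip}}$, such that the following holds for every $\alpha \in (0,\alpha_0)$. Let $\ell_k, \ell_l$ be affine lines, and set $T_k' = \ell_k(C\alpha)$, $T_k = \ell_k(\alpha^{1/2})$, $T_l' = \ell_l(C\alpha)$, $T_l = \ell_l(\alpha^{1/2})$. Let $\gamma_k,\gamma_l$ be $\mathbf{C}_{\mathrm{lip}}\alpha$-Lipschitz graphs over $\ell_k,\ell_l$ respectively with $\gamma_k \cap B(1) \subset T_k'$ and $\gamma_l \cap B(1) \subset T_l'$. Let $E \subset \mathbb{R}^2$ and let $G_k, G_l$ be compact sets with \[ G_k \subset (E \cap \gamma_k) \setminus T_l \subset B(1), \qquad G_l \subset (E \cap \gamma_l) \setminus T_k \subset B(1), \] and $\mathcal{H}^1(G_k) \geq \alpha^3/C$, $\mathcal{H}^1(G_l) \geq \alpha^3/C$. Then the set of lines $\mathcal{L}(G_k,G_l) = \{\ell : \ell \cap G_k \neq \emptyset \text{ and } \ell \cap G_l \neq \emptyset\}$ satisfies $\eta(\mathcal{L}(G_k,G_l)) \geq c\,\alpha^7$, and consequently \[ \int_{\mathcal{L}(E)} \big(\#(E \cap \ell) - 1\big)\, d\eta(\ell) \geq c\,\alpha^7. \]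
   Context: For a line $\ell$ and $w>0$, $\ell(w)$ is the closed $w$-neighbourhood of $\ell$. $B(1)$ is the closed unit ball centred at the origin. A $\beta$-Lipschitz graph over a line $\ell$ with unit direction $u$ is a set $\{p + tu + f(t)u^\perp : t \in A\}$ with $p \in \ell$, $u^\perp \perp u$ unit, $A\subset\mathbb{R}$, $f$ $\beta$-Lipschitz. For $\theta\in[0,\pi)$, $\pi_\theta(x) = x\cdot(\cos\theta,\sin\theta)$; on the family $\mathcal{A}$ of affine lines, $\eta(\mathcal{L}) = \int_0^\pi \mathcal{H}^1(\{t : \pi_\theta^{-1}\{t\}\in\mathcal{L}\})\,d\theta$; $\mathcal{L}(E)$ is the set of lines meeting $E$; $\#$ is cardinality. *)

theory Defs
  imports "HOL-Analysis.Analysis"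
begin

type_synonym pt = "real \<times> real"

definition affine_line :: "pt set \<Rightarrow> bool" where
  "affine_line lne \<longleftrightarrow> (\<exists>p u. u \<noteq> 0 \<and> lne = {p + s *\<^sub>R u | s. True})"

definition nbhd :: "pt set \<Rightarrow> real \<Rightarrow> pt set" where
  "nbhd lne w = {x. \<exists>y\<in>lne. dist x y \<le> w}"

definition lip_graph :: "real \<Rightarrow> pt set \<Rightarrow> pt set \<Rightarrow> bool" where
  "lip_graph \<beta> lne \<gamma> \<longleftrightarrow>
     (\<exists>p u v A f. p \<in> lne \<and> norm u = 1 \<and> lne = {p + s *\<^sub>R u | s. True} \<and>
        norm v = 1 \<and> inner u v = 0 \<and> lipschitz_on \<beta> A f \<and>
        \<gamma> = {p + t *\<^sub>R u + f t *\<^sub>R v | t. t \<in> A})"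

definition hausdorff1_delta :: "real \<Rightarrow> 'a::metric_space set \<Rightarrow> ennreal" where
  "hausdorff1_delta \<delta> A =
     (INF C \<in> {C :: nat \<Rightarrow> 'a set. A \<subseteq> (\<Union>i. C i) \<and> (\<forall>i. bounded (C i) \<and> diameter (C i) \<le> \<delta>)}.
        (\<Sum>i. ennreal (diameter (C i))))"

definition hausdorff1 :: "'a::metric_space set \<Rightarrow> ennreal" where
  "hausdorff1 A = (SUP \<delta> \<in> {0<..}. hausdorff1_delta \<delta> A)"

definition proj :: "real \<Rightarrow> pt \<Rightarrow> real" where
  "proj \<theta> x = fst x * cos \<theta> + snd x * sin \<theta>"

definition line_of :: "real \<Rightarrow> real \<Rightarrow> pt set" where
  "line_of \<theta> t = {x. proj \<theta> x = t}"

definition eta :: "pt set set \<Rightarrow> ennreal" where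
  "eta L = (\<integral>\<^sup>+ \<theta> \<in> {0..<pi}. emeasure lebesgue {t. line_of \<theta> t \<in> L} \<partial>lborel)"

definition eta_integral :: "(pt set \<Rightarrow> ennreal) \<Rightarrow> ennreal" where
  "eta_integral F = (\<integral>\<^sup>+ \<theta> \<in> {0..<pi}. (\<integral>\<^sup>+ t. F (line_of \<theta> t) \<partial>lborel) \<partial>lborel)"

definition lines_meeting :: "pt set \<Rightarrow> pt set set" where
  "lines_meeting E = {lne. affine_line lne \<and> lne \<inter> E \<noteq> {}}"

definition lines_meeting2 :: "pt set \<Rightarrow> pt set \<Rightarrow> pt set set" where
  "lines_meeting2 G H = {lne. affine_line lne \<and> lne \<inter> G \<noteq> {} \<and> lne \<inter> H \<noteq> {}}"

definition ecard :: "'a set \<Rightarrow> ennreal" where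
  "ecard S = (if finite S then ennreal (real (card S)) else \<infinity>)"

end

(*
  Write r = sqrt alpha. Points of G_k lie within r/2 of l_k and farther than r from l_l, and
  symmetrically for G_l; hence every line through a point of G_k and a point of G_l is transversal
  to both l_k and l_l (its unit normal e has |<e, u>| >= r/4 for both directions u), whereas both
  graphs have slope at most r/8.

  Parametrise the graphs by their coordinates along l_k and l_l and consider the compact set of
  pairs (theta, s) such that the line with normal angle theta through the point of G_k with
  coordinate s meets G_l. For fixed theta, projecting onto the normal expands distances along
  gamma_k by a factor at least r/8, so the s-section has measure at most 16/r times the measure of
  proj_theta G_k intersected with proj_theta G_l, which is the integrand of eta. For fixed s,
  turning the line about that point moves its intersection with gamma_l at speed at most 16/r, so
  the theta-section has measure at least r/32 times the measure of the coordinates of G_l. By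
  Fubini, eta(L(G_k, G_l)) >= (r^2/512) |coord G_k| |coord G_l|, and H^1(G) <= 2 |coord G| for a
  graph of slope at most 1 gives the bound alpha^7 / (2048 C^2). A line meeting the disjoint sets
  G_k, G_l contained in E meets E twice, whence the bound for the integral.
*)

theory Submission
  imports Defs
begin

section \<open>Lebesgue and Hausdorff measure\<close>

lemma emeasure_lborel_compact:
  assumes "compact S"
  shows "emeasure lborel S = ennreal (measure lborel S)"
proof (rule emeasure_eq_ennreal_measure)
  show "emeasure lborel S \<noteq> top"
    using emeasure_bounded_finite[OF compact_imp_bounded[OF assms]] by simp
qed

definition grid_cell :: "real \<Rightarrow> int \<Rightarrow> real set" where
  "grid_cell h k = {of_int k * h ..< (of_int k + 1) * h}"

lemma grid_cell_disjoint:
  assumes "0 < h" "k \<noteq> k'"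
  shows "grid_cell h k \<inter> grid_cell h k' = {}"
proof -
  have "(of_int i + 1) * h \<le> of_int j * h" if "i < j" for i j :: int
    using that \<open>0 < h\<close> by (intro mult_right_mono) auto
  then show ?thesis
    using \<open>k \<noteq> k'\<close> by (cases k k' rule: linorder_cases) (fastforce simp: grid_cell_def)+
qed

lemma mem_grid_cell_floor: "0 < h \<Longrightarrow> x \<in> grid_cell h \<lfloor>x / h\<rfloor>"
  by (simp add: grid_cell_def floor_divide_lower floor_divide_upper)

lemma dist_grid_cell: "x \<in> grid_cell h k \<Longrightarrow> y \<in> grid_cell h k \<Longrightarrow> dist x y < h"
  by (auto simp: grid_cell_def dist_real_def algebra_simps)

lemma finite_floor_image:
  fixes S :: "real set"
  assumes "bounded S" "0 < h"
  shows "finite ((\<lambda>s. \<lfloor>s / h\<rfloor>) ` S)"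
proof -
  obtain R where R: "\<And>s. s \<in> S \<Longrightarrow> \<bar>s\<bar> \<le> R"
    using assms(1) by (auto simp: bounded_iff)
  have "(\<lambda>s. \<lfloor>s / h\<rfloor>) ` S \<subseteq> {\<lfloor>- R / h\<rfloor> .. \<lfloor>R / h\<rfloor>}"
  proof clarify
    fix s assume "s \<in> S"
    then have "- R \<le> s" "s \<le> R" using R by fastforce+
    then have "- R / h \<le> s / h" "s / h \<le> R / h" using assms(2) by (simp_all only: divide_right_mono)
    then show "\<lfloor>s / h\<rfloor> \<in> {\<lfloor>- R / h\<rfloor> .. \<lfloor>R / h\<rfloor>}"
      by (auto intro: floor_mono)
  qed
  then show ?thesis
    by (rule finite_subset) simp
qed

lemma emeasure_grid_cells:
  assumes "0 < h" "finite K"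
  shows "emeasure lborel (\<Union>k\<in>K. grid_cell h k) = ennreal (h * card K)"
proof -
  have "emeasure lborel (grid_cell h k) = ennreal h" for k
    using assms(1) by (simp add: grid_cell_def algebra_simps)
  then have "ennreal (h * card K) = (\<Sum>k\<in>K. emeasure lborel (grid_cell h k))"
    using assms(1) by (simp add: ennreal_mult ennreal_of_nat_eq_real_of_nat mult.commute)
  also have "\<dots> = emeasure lborel (\<Union>k\<in>K. grid_cell h k)"
    using assms grid_cell_disjoint[OF assms(1)]
    by (intro sum_emeasure) (auto simp: disjoint_family_on_def grid_cell_def)
  finally show ?thesis ..
qed

lemma compact_grid_cover:
  fixes S :: "real set"
  assumes S: "compact S" and e: "0 < e" and \<delta>: "0 < \<delta>"
  obtains h K where "0 < h" "h \<le> \<delta>" "finite K" "S \<subseteq> (\<Union>k\<in>K. grid_cell h k)"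
    "h * card K \<le> measure lborel S + e"
proof -
  have S_borel: "S \<in> sets borel" using S by (simp add: compact_imp_closed borel_closed)
  obtain U where U: "open U" "S \<subseteq> U" "emeasure lborel (U - S) < e"
    using outer_regular_lborel[OF S_borel e] by blast
  have "S \<inter> - U = {}" using U(2) by blast
  then obtain d where d: "0 < d" "\<And>x y. x \<in> S \<Longrightarrow> y \<notin> U \<Longrightarrow> d \<le> dist x y"
    using separate_compact_closed[OF S closed_Compl[OF U(1)]] by (metis ComplI)
  define h where "h = min \<delta> (d / 2)"
  have h: "0 < h" "h \<le> \<delta>" "h < d" using \<delta> d by (auto simp: h_def)
  define K where "K = (\<lambda>s. \<lfloor>s / h\<rfloor>) ` S"
  have K_fin: "finite K"
    unfolding K_def using compact_imp_bounded[OF S] h(1) by (rule finite_floor_image)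
  have cover: "S \<subseteq> (\<Union>k\<in>K. grid_cell h k)"
    using mem_grid_cell_floor[OF h(1)] by (auto simp: K_def)
  have cells_U: "(\<Union>k\<in>K. grid_cell h k) \<subseteq> U"
  proof
    fix x assume "x \<in> (\<Union>k\<in>K. grid_cell h k)"
    then obtain s where s: "s \<in> S" and x: "x \<in> grid_cell h \<lfloor>s / h\<rfloor>" by (auto simp: K_def)
    have "dist s x < d"
      using dist_grid_cell[OF mem_grid_cell_floor[OF h(1)] x] h(3) by linarith
    then show "x \<in> U" using d(2)[OF s] by force
  qed
  have "ennreal (h * card K) = emeasure lborel (\<Union>k\<in>K. grid_cell h k)"
    by (rule emeasure_grid_cells[OF h(1) K_fin, symmetric])
  also have "\<dots> \<le> emeasure lborel U"
    using cells_U U(1) by (intro emeasure_mono) auto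
  also have "\<dots> = emeasure lborel S + emeasure lborel (U - S)"
    using plus_emeasure[of S lborel "U - S"] U S_borel by (simp add: Un_absorb1)
  also have "\<dots> \<le> ennreal (measure lborel S) + ennreal e"
    using U(3) by (intro add_mono) (auto simp: emeasure_lborel_compact[OF S])
  also have "\<dots> = ennreal (measure lborel S + e)"
    using e by (simp add: ennreal_plus)
  finally have "h * card K \<le> measure lborel S + e"
    using e by (subst (asm) ennreal_le_iff) (auto intro: add_nonneg_pos)
  with that h K_fin cover show ?thesis by blast
qed

lemma hausdorff1_delta_le_finite_cover:
  assumes "0 \<le> \<delta>" "finite I" "A \<subseteq> (\<Union>i\<in>I. B i)"
    and "\<And>i. i \<in> I \<Longrightarrow> bounded (B i) \<and> diameter (B i) \<le> \<delta>"
  shows "hausdorff1_delta \<delta> A \<le> (\<Sum>i\<in>I. ennreal (diameter (B i)))"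
proof -
  obtain g where g: "bij_betw g {..<card I} I"
    using ex_bij_betw_nat_finite[OF \<open>finite I\<close>] by (auto simp: atLeast0LessThan)
  define C where "C n = (if n < card I then B (g n) else {})" for n
  have "A \<subseteq> (\<Union>n. C n)"
    using assms(3) g by (force simp: C_def bij_betw_def)
  moreover have "bounded (C n) \<and> diameter (C n) \<le> \<delta>" for n
    using assms(1,4) g by (auto simp: C_def bij_betw_def)
  ultimately have "hausdorff1_delta \<delta> A \<le> (\<Sum>n. ennreal (diameter (C n)))"
    unfolding hausdorff1_delta_def by (intro INF_lower) blast
  also have "\<dots> = (\<Sum>n<card I. ennreal (diameter (B (g n))))"
    by (subst suminf_finite[of "{..<card I}"]) (auto simp: C_def)
  also have "\<dots> = (\<Sum>i\<in>I. ennreal (diameter (B i)))"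
    using sum.reindex_bij_betw[OF g, of "\<lambda>i. ennreal (diameter (B i))"] by simp
  finally show ?thesis .
qed

lemma bounded_diameter_preimage_grid_cell:
  fixes h :: "'a \<Rightarrow> 'b::metric_space" and P :: "'a \<Rightarrow> real"
  assumes K: "0 \<le> K" and a: "0 < a"
    and lip: "\<And>x y. x \<in> X \<Longrightarrow> y \<in> X \<Longrightarrow> dist (h x) (h y) \<le> K * dist (P x) (P y)"
  shows "bounded (h ` (X \<inter> P -` grid_cell a k)) \<and> diameter (h ` (X \<inter> P -` grid_cell a k)) \<le> K * a"
proof -
  define B where "B = h ` (X \<inter> P -` grid_cell a k)"
  have "dist y z \<le> K * a" if yz: "y \<in> B" "z \<in> B" for y z
  proof -
    obtain x x' where x: "x \<in> X" "x' \<in> X" "P x \<in> grid_cell a k" "P x' \<in> grid_cell a k"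
      and "y = h x" "z = h x'" using yz unfolding B_def by blast
    then have "dist y z \<le> K * dist (P x) (P x')"
      using lip by simp
    also have "\<dots> \<le> K * a"
      using dist_grid_cell[OF x(3,4)] K by (intro mult_left_mono) auto
    finally show ?thesis .
  qed
  then have "bounded B \<and> diameter B \<le> K * a"
    using K a by (auto simp: bounded_two_points diameter_def intro!: cSUP_least)
  then show ?thesis
    by (simp add: B_def)
qed

lemma hausdorff1_delta_image_le:
  fixes h :: "'a \<Rightarrow> 'b::metric_space" and P :: "'a \<Rightarrow> real"
  assumes PX: "compact (P ` X)" and K: "0 \<le> K"
    and lip: "\<And>x y. x \<in> X \<Longrightarrow> y \<in> X \<Longrightarrow> dist (h x) (h y) \<le> K * dist (P x) (P y)"
    and \<delta>: "0 < \<delta>" and e: "0 < e"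
  shows "hausdorff1_delta \<delta> (h ` X) \<le> ennreal (K * measure lborel (P ` X)) + ennreal e"
proof -
  obtain a I where a: "0 < a" "a \<le> \<delta> / (K + 1)" and I: "finite I"
    and cover: "P ` X \<subseteq> (\<Union>k\<in>I. grid_cell a k)"
    and count: "a * card I \<le> measure lborel (P ` X) + e / (K + 1)"
    using compact_grid_cover[OF PX, of "e / (K + 1)" "\<delta> / (K + 1)"] \<delta> e K by auto
  define B where "B k = h ` (X \<inter> P -` grid_cell a k)" for k
  have B: "bounded (B k) \<and> diameter (B k) \<le> K * a" for k
    unfolding B_def using K a(1) lip by (rule bounded_diameter_preimage_grid_cell)
  have "K * a \<le> \<delta>"
    using a K \<delta> by (simp add: field_simps)
  have "h ` X \<subseteq> (\<Union>k\<in>I. B k)"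
    using cover by (force simp: B_def)
  moreover have "bounded (B k) \<and> diameter (B k) \<le> \<delta>" for k
    using B \<open>K * a \<le> \<delta>\<close> by (meson order_trans)
  ultimately have "hausdorff1_delta \<delta> (h ` X) \<le> (\<Sum>k\<in>I. ennreal (diameter (B k)))"
    using \<delta> I by (intro hausdorff1_delta_le_finite_cover) auto
  also have "\<dots> \<le> (\<Sum>k\<in>I. ennreal (K * a))"
    using B by (intro sum_mono ennreal_leI) auto
  also have "\<dots> = ennreal (K * (a * card I))"
    using K a by (simp add: ennreal_mult ennreal_of_nat_eq_real_of_nat mult.commute mult.left_commute)
  also have "\<dots> \<le> ennreal (K * (measure lborel (P ` X) + e / (K + 1)))"
    using count K by (intro ennreal_leI mult_left_mono)
  also have "\<dots> \<le> ennreal (K * measure lborel (P ` X)) + ennreal e"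
  proof -
    have "K * (e / (K + 1)) \<le> e"
      using K e by (simp add: field_simps)
    then show ?thesis
      using K e by (simp add: distrib_left ennreal_plus[symmetric] del: ennreal_plus)
  qed
  finally show ?thesis .
qed

lemma hausdorff1_image_le:
  fixes h :: "'a \<Rightarrow> 'b::metric_space" and P :: "'a \<Rightarrow> real"
  assumes PX: "compact (P ` X)" and K: "0 \<le> K"
    and lip: "\<And>x y. x \<in> X \<Longrightarrow> y \<in> X \<Longrightarrow> dist (h x) (h y) \<le> K * dist (P x) (P y)"
  shows "hausdorff1 (h ` X) \<le> ennreal K * emeasure lborel (P ` X)"
proof -
  have "hausdorff1 (h ` X) \<le> ennreal (K * measure lborel (P ` X))"
    unfolding hausdorff1_def
  proof (rule SUP_least)
    fix \<delta> :: real assume \<delta>: "\<delta> \<in> {0<..}"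
    show "hausdorff1_delta \<delta> (h ` X) \<le> ennreal (K * measure lborel (P ` X))"
    proof (rule ennreal_le_epsilon)
      fix e :: real assume "0 < e"
      with \<delta> show "hausdorff1_delta \<delta> (h ` X) \<le> ennreal (K * measure lborel (P ` X)) + ennreal e"
        by (intro hausdorff1_delta_image_le[OF PX K lip]) auto
    qed
  qed
  also have "\<dots> = ennreal K * emeasure lborel (P ` X)"
    using K by (simp add: ennreal_mult emeasure_lborel_compact[OF PX])
  finally show ?thesis .
qed

lemma emeasure_le_sum_diameter:
  fixes T :: "real set" and C :: "nat \<Rightarrow> real set"
  assumes cover: "T \<subseteq> (\<Union>i. C i)" and C: "\<And>i. bounded (C i)"
  shows "emeasure lborel T \<le> 2 * (\<Sum>i. ennreal (diameter (C i)))"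
proof -
  define c where "c i = (SOME x. x \<in> C i)" for i
  have C_cball: "C i \<subseteq> cball (c i) (diameter (C i))" for i
  proof (cases "C i = {}")
    case False
    then have "c i \<in> C i" by (simp add: c_def some_in_eq)
    then show ?thesis using C diameter_bounded_bound by (fastforce simp: dist_commute)
  qed simp
  have "T \<subseteq> (\<Union>i. cball (c i) (diameter (C i)))"
    using cover C_cball by blast
  then have "emeasure lborel T \<le> emeasure lborel (\<Union>i. cball (c i) (diameter (C i)))"
    by (intro emeasure_mono) auto
  also have "\<dots> \<le> (\<Sum>i. emeasure lborel (cball (c i) (diameter (C i))))"
    by (intro emeasure_subadditive_countably) auto
  also have "\<dots> = (\<Sum>i. 2 * ennreal (diameter (C i)))"
  proof (intro suminf_cong)
    fix i
    have d: "0 \<le> diameter (C i)" using C diameter_ge_0 by blast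
    then have "emeasure lborel (cball (c i) (diameter (C i))) = ennreal (2 * diameter (C i))"
      by (simp add: cball_eq_atLeastAtMost)
    then show "emeasure lborel (cball (c i) (diameter (C i))) = 2 * ennreal (diameter (C i))"
      using d by (simp add: ennreal_mult)
  qed
  finally show ?thesis
    by simp
qed

lemma emeasure_le_hausdorff1:
  fixes T :: "real set"
  shows "emeasure lborel T \<le> 2 * hausdorff1 T"
proof -
  have half: "ennreal (1 / 2) * 2 = 1"
    using ennreal_mult[of "1 / 2" 2] by simp
  have "ennreal (1 / 2) * emeasure lborel T \<le> hausdorff1_delta 1 T"
    unfolding hausdorff1_delta_def
  proof (rule INF_greatest, clarify)
    fix C :: "nat \<Rightarrow> real set"
    assume "T \<subseteq> (\<Union>i. C i)" "\<forall>i. bounded (C i) \<and> diameter (C i) \<le> 1"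
    then have "ennreal (1 / 2) * emeasure lborel T \<le> ennreal (1 / 2) * (2 * (\<Sum>i. ennreal (diameter (C i))))"
      by (intro mult_left_mono emeasure_le_sum_diameter) auto
    then show "ennreal (1 / 2) * emeasure lborel T \<le> (\<Sum>i. ennreal (diameter (C i)))"
      by (metis half mult.assoc mult_1)
  qed
  also have "\<dots> \<le> hausdorff1 T"
    unfolding hausdorff1_def by (rule SUP_upper) simp
  finally have "2 * (ennreal (1 / 2) * emeasure lborel T) \<le> 2 * hausdorff1 T"
    by (intro mult_left_mono) auto
  then show ?thesis
    by (metis half mult.assoc mult.commute mult_1)
qed

lemma emeasure_image_le:
  fixes h P :: "'a \<Rightarrow> real"
  assumes PX: "compact (P ` X)" and K: "0 \<le> K"
    and lip: "\<And>x y. x \<in> X \<Longrightarrow> y \<in> X \<Longrightarrow> \<bar>h x - h y\<bar> \<le> K * \<bar>P x - P y\<bar>"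
  shows "emeasure lborel (h ` X) \<le> ennreal (2 * K) * emeasure lborel (P ` X)"
proof -
  have "emeasure lborel (h ` X) \<le> 2 * hausdorff1 (h ` X)"
    by (rule emeasure_le_hausdorff1)
  also have "\<dots> \<le> 2 * (ennreal K * emeasure lborel (P ` X))"
    using PX K lip by (intro mult_left_mono hausdorff1_image_le) (auto simp: dist_real_def)
  also have "\<dots> = ennreal (2 * K) * emeasure lborel (P ` X)"
    using K by (simp add: ennreal_mult mult.assoc)
  finally show ?thesis .
qed

lemma emeasure_sections_bound:
  fixes W :: "(real \<times> real) set" and A :: "real set"
  assumes W: "W \<in> sets borel" and A: "A \<in> sets borel"
    and lower: "\<And>s. s \<in> A \<Longrightarrow> c \<le> emeasure lborel {\<theta>. (\<theta>, s) \<in> W}"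
    and upper: "AE \<theta> in lborel. a * emeasure lborel {s. (\<theta>, s) \<in> W} \<le> F \<theta>"
  shows "a * c * emeasure lborel A \<le> (\<integral>\<^sup>+\<theta>. F \<theta> \<partial>lborel)"
proof -
  have W': "W \<in> sets (lborel \<Otimes>\<^sub>M lborel)"
    unfolding lborel_prod using W by simp
  have "c * emeasure lborel A = (\<integral>\<^sup>+s. c * indicator A s \<partial>lborel)"
    using A by (simp add: nn_integral_cmult_indicator)
  also have "\<dots> \<le> (\<integral>\<^sup>+s. emeasure lborel ((\<lambda>\<theta>. (\<theta>, s)) -` W) \<partial>lborel)"
    using lower by (intro nn_integral_mono) (auto split: split_indicator simp: vimage_def)
  also have "\<dots> = emeasure (lborel \<Otimes>\<^sub>M lborel) W"
    by (rule lborel_pair.emeasure_pair_measure_alt2[OF W', symmetric])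
  also have "\<dots> = (\<integral>\<^sup>+\<theta>. emeasure lborel (Pair \<theta> -` W) \<partial>lborel)"
    by (rule lborel.emeasure_pair_measure_alt[OF W'])
  finally have "a * c * emeasure lborel A \<le> a * (\<integral>\<^sup>+\<theta>. emeasure lborel (Pair \<theta> -` W) \<partial>lborel)"
    by (simp add: mult.assoc mult_left_mono)
  also have "\<dots> = (\<integral>\<^sup>+\<theta>. a * emeasure lborel (Pair \<theta> -` W) \<partial>lborel)"
    by (rule nn_integral_cmult[symmetric]) (rule lborel.measurable_emeasure_Pair[OF W'])
  also have "\<dots> \<le> (\<integral>\<^sup>+\<theta>. F \<theta> \<partial>lborel)"
    using upper by (intro nn_integral_mono_AE) (simp add: vimage_def)
  finally show ?thesis .
qed

section \<open>Orthonormal frames and Lipschitz graphs in the plane\<close>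

locale orthonormal_frame =
  fixes u v :: pt
  assumes norm_u: "norm u = 1" and norm_v: "norm v = 1" and inner_uv: "inner u v = 0"
begin

lemma decompose: "x = inner x u *\<^sub>R u + inner x v *\<^sub>R v"
proof -
  obtain u1 u2 v1 v2 x1 x2 where uvx: "u = (u1, u2)" "v = (v1, v2)" "x = (x1, x2)"
    by (cases u, cases v, cases x) auto
  have "u1 * u1 + u2 * u2 = 1" "v1 * v1 + v2 * v2 = 1" "u1 * v1 + u2 * v2 = 0"
    using norm_u norm_v inner_uv by (simp_all add: uvx norm_Pair inner_prod_def power2_eq_square)
  then have "x1 = (x1 * u1 + x2 * u2) * u1 + (x1 * v1 + x2 * v2) * v1"
    "x2 = (x1 * u1 + x2 * u2) * u2 + (x1 * v1 + x2 * v2) * v2"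
    by algebra+
  then show ?thesis by (simp add: uvx inner_prod_def)
qed

lemma inner_expand: "inner a b = inner a u * inner b u + inner a v * inner b v"
proof -
  have "inner a b = inner (inner a u *\<^sub>R u + inner a v *\<^sub>R v) b"
    by (metis decompose)
  then show ?thesis
    by (simp add: inner_add_left inner_commute[of u b] inner_commute[of v b])
qed

lemma norm_sq_expand: "(norm a)\<^sup>2 = (inner a u)\<^sup>2 + (inner a v)\<^sup>2"
  unfolding power2_norm_eq_inner inner_expand[of a a] by (simp add: power2_eq_square)

lemma mem_nbhd_line_iff:
  assumes lne: "lne = {p + s *\<^sub>R u | s. True}"
  shows "x \<in> nbhd lne w \<longleftrightarrow> \<bar>inner (x - p) v\<bar> \<le> w"
proof
  assume "x \<in> nbhd lne w"
  then obtain s where "dist x (p + s *\<^sub>R u) \<le> w"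
    using lne by (auto simp: nbhd_def)
  moreover have "inner (x - p) v = inner (x - (p + s *\<^sub>R u)) v"
    using inner_uv by (simp add: algebra_simps inner_diff_left)
  moreover have "\<bar>inner (x - (p + s *\<^sub>R u)) v\<bar> \<le> norm (x - (p + s *\<^sub>R u))"
    using Cauchy_Schwarz_ineq2[of _ v] norm_v by simp
  ultimately show "\<bar>inner (x - p) v\<bar> \<le> w"
    by (simp add: dist_norm)
next
  assume w: "\<bar>inner (x - p) v\<bar> \<le> w"
  have "x - (p + inner (x - p) u *\<^sub>R u) = inner (x - p) v *\<^sub>R v"
    using decompose[of "x - p"] by (simp add: algebra_simps)
  then have "dist x (p + inner (x - p) u *\<^sub>R u) \<le> w"
    using w norm_v by (simp add: dist_norm)
  then show "x \<in> nbhd lne w"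
    using lne unfolding nbhd_def by blast
qed

text \<open>In the plane a unit vector orthogonal to \<open>w\<close> is \<open>w / norm w\<close> rotated by a right angle,
  up to sign.\<close>

lemma abs_inner_orthogonal:
  assumes e: "norm e = 1" and ew: "inner e w = 0"
  shows "\<bar>inner e u\<bar> * norm w = \<bar>inner w v\<bar>"
proof -
  have "(inner e u)\<^sup>2 + (inner e v)\<^sup>2 = 1"
    using norm_sq_expand[of e] e by simp
  moreover have "inner e u * inner w u + inner e v * inner w v = 0"
    using inner_expand[of e w] ew by simp
  ultimately have "(inner e u)\<^sup>2 * (norm w)\<^sup>2 = (inner w v)\<^sup>2"
    unfolding norm_sq_expand[of w] by algebra
  then have "sqrt ((inner e u)\<^sup>2 * (norm w)\<^sup>2) = sqrt ((inner w v)\<^sup>2)"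
    by simp
  then show ?thesis
    by (simp add: real_sqrt_mult)
qed

lemma transversal:
  assumes far: "r < \<bar>inner (x - p) v\<bar>" and near: "\<bar>inner (y - p) v\<bar> \<le> r / 2"
    and short: "norm (y - x) \<le> 2" and e: "norm e = 1" "inner e (y - x) = 0"
  shows "r / 4 \<le> \<bar>inner e u\<bar>"
proof -
  have "r / 2 \<le> \<bar>inner (x - p) v\<bar> - \<bar>inner (y - p) v\<bar>"
    using far near by linarith
  also have "\<dots> \<le> \<bar>inner (y - x) v\<bar>"
    using abs_triangle_ineq2[of "inner (x - p) v" "inner (y - p) v"]
    by (simp add: inner_diff_left abs_minus_commute)
  also have "\<dots> = \<bar>inner e u\<bar> * norm (y - x)"
    using abs_inner_orthogonal[OF e] by simp
  also have "\<dots> \<le> \<bar>inner e u\<bar> * 2"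
    using short by (intro mult_left_mono) auto
  finally show ?thesis by simp
qed

end

locale lipschitz_graph = orthonormal_frame u v for u v :: pt +
  fixes p :: pt and A :: "real set" and f :: "real \<Rightarrow> real" and \<beta> :: real
  assumes lipschitz: "lipschitz_on \<beta> A f"
begin

definition graph :: "pt set" where
  "graph = {p + t *\<^sub>R u + f t *\<^sub>R v | t. t \<in> A}"

definition coord :: "pt \<Rightarrow> real" where
  "coord x = inner (x - p) u"

lemma beta_nonneg: "0 \<le> \<beta>"
  using lipschitz by (simp add: lipschitz_on_def)

lemma graph_coord:
  assumes "x \<in> graph"
  shows "coord x \<in> A" "x = p + coord x *\<^sub>R u + f (coord x) *\<^sub>R v"
proof -
  obtain t where t: "t \<in> A" "x = p + t *\<^sub>R u + f t *\<^sub>R v"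
    using assms by (auto simp: graph_def)
  moreover have "coord x = t"
    using t norm_u inner_uv by (simp add: coord_def inner_add_left inner_commute[of v u] norm_eq_1)
  ultimately show "coord x \<in> A" "x = p + coord x *\<^sub>R u + f (coord x) *\<^sub>R v" by simp_all
qed

lemma graph_diff:
  assumes "x \<in> graph" "y \<in> graph"
  shows "x - y = (coord x - coord y) *\<^sub>R u + (f (coord x) - f (coord y)) *\<^sub>R v"
    and "\<bar>f (coord x) - f (coord y)\<bar> \<le> \<beta> * \<bar>coord x - coord y\<bar>"
proof -
  show "x - y = (coord x - coord y) *\<^sub>R u + (f (coord x) - f (coord y)) *\<^sub>R v"
    using graph_coord(2)[OF assms(1)] graph_coord(2)[OF assms(2)]
    by (metis (no_types, lifting) add_diff_cancel_left add_diff_add scaleR_diff_left)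
  show "\<bar>f (coord x) - f (coord y)\<bar> \<le> \<beta> * \<bar>coord x - coord y\<bar>"
    using lipschitz_onD[OF lipschitz graph_coord(1)[OF assms(1)] graph_coord(1)[OF assms(2)]]
    by (simp add: dist_real_def)
qed

lemma dist_graph_le:
  assumes "x \<in> graph" "y \<in> graph"
  shows "dist x y \<le> (1 + \<beta>) * \<bar>coord x - coord y\<bar>"
proof -
  have "dist x y \<le> norm ((coord x - coord y) *\<^sub>R u) + norm ((f (coord x) - f (coord y)) *\<^sub>R v)"
    unfolding dist_norm graph_diff(1)[OF assms] by (rule norm_triangle_ineq)
  also have "\<dots> \<le> (1 + \<beta>) * \<bar>coord x - coord y\<bar>"
    using graph_diff(2)[OF assms] by (simp add: norm_u norm_v distrib_right)
  finally show ?thesis .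
qed

lemma abs_inner_graph_ge:
  assumes "x \<in> graph" "y \<in> graph" and e: "norm e = 1"
  shows "(\<bar>inner e u\<bar> - \<beta>) * \<bar>coord x - coord y\<bar> \<le> \<bar>inner e (x - y)\<bar>"
proof -
  define d where "d = coord x - coord y"
  define d' where "d' = f (coord x) - f (coord y)"
  have "\<bar>inner e v\<bar> \<le> 1"
    using Cauchy_Schwarz_ineq2[of e v] e norm_v by simp
  then have "\<bar>d' * inner e v\<bar> \<le> \<beta> * \<bar>d\<bar>"
    using graph_diff(2)[OF assms(1,2)] unfolding d_def d'_def
    by (simp add: abs_mult) (meson abs_ge_zero mult_left_le order_trans)
  then have "(\<bar>inner e u\<bar> - \<beta>) * \<bar>d\<bar> \<le> \<bar>d * inner e u\<bar> - \<bar>d' * inner e v\<bar>"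
    by (simp add: abs_mult algebra_simps)
  also have "\<dots> \<le> \<bar>d * inner e u + d' * inner e v\<bar>"
    using abs_triangle_ineq2[of "d * inner e u" "- (d' * inner e v)"] by simp
  also have "d * inner e u + d' * inner e v = inner e (x - y)"
    unfolding graph_diff(1)[OF assms(1,2)] d_def d'_def by (simp add: inner_add_right)
  finally show ?thesis
    unfolding d_def .
qed

lemma coord_diff_le:
  assumes "x \<in> graph" "y \<in> graph" and e: "norm e = 1" "r / 4 \<le> \<bar>inner e u\<bar>"
    and r: "0 < r" "\<beta> \<le> r / 8"
  shows "\<bar>coord x - coord y\<bar> \<le> 8 / r * \<bar>inner e (x - y)\<bar>"
proof -
  have "r / 8 * \<bar>coord x - coord y\<bar> \<le> (\<bar>inner e u\<bar> - \<beta>) * \<bar>coord x - coord y\<bar>"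
    using e r by (intro mult_right_mono) auto
  also have "\<dots> \<le> \<bar>inner e (x - y)\<bar>"
    by (rule abs_inner_graph_ge[OF assms(1-3)])
  finally show ?thesis
    using r by (simp add: field_simps)
qed

lemma continuous_on_coord: "continuous_on S coord"
  unfolding coord_def by (intro continuous_intros)

lemma hausdorff1_le_coord:
  assumes "compact G" "G \<subseteq> graph"
  shows "hausdorff1 G \<le> ennreal (1 + \<beta>) * emeasure lborel (coord ` G)"
proof -
  have "hausdorff1 (id ` G) \<le> ennreal (1 + \<beta>) * emeasure lborel (coord ` G)"
    using assms dist_graph_le beta_nonneg
    by (intro hausdorff1_image_le compact_continuous_image continuous_on_coord)
       (auto simp: dist_real_def subset_iff)
  then show ?thesis by simp
qed

lemma emeasure_coord_eq:
  assumes "compact G"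
  shows "emeasure lborel (coord ` G) = ennreal (measure lborel (coord ` G))"
  using assms by (intro emeasure_lborel_compact compact_continuous_image continuous_on_coord)

lemma measure_coord_ge:
  assumes "compact G" "G \<subseteq> graph" "\<beta> \<le> 1" "ennreal a \<le> hausdorff1 G"
  shows "a / 2 \<le> measure lborel (coord ` G)"
proof -
  have "ennreal a \<le> ennreal (1 + \<beta>) * emeasure lborel (coord ` G)"
    using assms(4) hausdorff1_le_coord[OF assms(1,2)] by (rule order_trans)
  also have "\<dots> = ennreal ((1 + \<beta>) * measure lborel (coord ` G))"
    using beta_nonneg by (simp add: emeasure_coord_eq[OF assms(1)] ennreal_mult)
  also have "\<dots> \<le> ennreal (2 * measure lborel (coord ` G))"
    using assms(3) by (intro ennreal_leI mult_right_mono) auto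
  finally have "a \<le> 2 * measure lborel (coord ` G)"
    by (subst (asm) ennreal_le_iff) auto
  then show ?thesis
    by simp
qed

end

section \<open>Lines with a given normal angle\<close>

lemma proj_eq_inner: "proj \<theta> x = inner (cos \<theta>, sin \<theta>) x"
  by (simp add: proj_def inner_prod_def mult.commute)

lemma orthonormal_frame_angle: "orthonormal_frame (cos \<theta>, sin \<theta>) (- sin \<theta>, cos \<theta>)"
  by unfold_locales (simp_all add: norm_Pair inner_prod_def)

lemma norm_cos_sin: "norm ((cos \<theta>, sin \<theta>) :: pt) = 1"
  by (rule orthonormal_frame.norm_u[OF orthonormal_frame_angle])

lemma continuous_on_proj [continuous_intros]:
  fixes f :: "'a::t2_space \<Rightarrow> real" and g :: "'a \<Rightarrow> pt"
  assumes "continuous_on S f" "continuous_on S g"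
  shows "continuous_on S (\<lambda>z. proj (f z) (g z))"
  unfolding proj_def
  by (intro continuous_intros assms)

lemma line_of_eq: "line_of \<theta> t = {t *\<^sub>R (cos \<theta>, sin \<theta>) + s *\<^sub>R (- sin \<theta>, cos \<theta>) | s. True}"
proof -
  interpret orthonormal_frame "(cos \<theta>, sin \<theta>)" "(- sin \<theta>, cos \<theta>)"
    by (rule orthonormal_frame_angle)
  show ?thesis
  proof (intro set_eqI iffI)
    fix x assume "x \<in> line_of \<theta> t"
    then have "inner x (cos \<theta>, sin \<theta>) = t"
      by (simp add: line_of_def proj_eq_inner inner_commute)
    then show "x \<in> {t *\<^sub>R (cos \<theta>, sin \<theta>) + s *\<^sub>R (- sin \<theta>, cos \<theta>) | s. True}"
      using decompose[of x] by auto
  next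
    fix x assume "x \<in> {t *\<^sub>R (cos \<theta>, sin \<theta>) + s *\<^sub>R (- sin \<theta>, cos \<theta>) | s. True}"
    then obtain s where x: "x = t *\<^sub>R (cos \<theta>, sin \<theta>) + s *\<^sub>R (- sin \<theta>, cos \<theta>)" by blast
    have "proj \<theta> x = t"
      by (simp add: x proj_def algebra_simps) (metis distrib_left mult.right_neutral sin_cos_squared_add3)
    then show "x \<in> line_of \<theta> t"
      by (simp add: line_of_def)
  qed
qed

lemma affine_line_line_of: "affine_line (line_of \<theta> t)"
proof -
  have "(- sin \<theta>, cos \<theta>) \<noteq> (0 :: pt)"
    using orthonormal_frame.norm_v[OF orthonormal_frame_angle, of \<theta>] by auto
  then show ?thesis
    unfolding affine_line_def line_of_eq by blast
qed

lemma mem_line_of [simp]: "x \<in> line_of \<theta> t \<longleftrightarrow> proj \<theta> x = t"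
  by (simp add: line_of_def)

lemma line_of_Int_eq_empty_iff: "line_of \<theta> t \<inter> G = {} \<longleftrightarrow> t \<notin> proj \<theta> ` G"
  by auto

lemma lines_meeting2_line_of: "{t. line_of \<theta> t \<in> lines_meeting2 G H} = proj \<theta> ` G \<inter> proj \<theta> ` H"
  by (auto simp: lines_meeting2_def affine_line_line_of line_of_Int_eq_empty_iff)

lemma exists_angle_proj_eq_0:
  assumes "w \<noteq> 0"
  obtains \<theta> where "0 \<le> \<theta>" "\<theta> \<le> pi" "proj \<theta> w = 0"
proof -
  obtain a b where w: "w = (a, b)" by (cases w)
  define n where "n = norm w"
  have "0 < n" using assms by (simp add: n_def)
  have n2: "a\<^sup>2 + b\<^sup>2 = n\<^sup>2" by (simp add: n_def w norm_Pair)
  have "(- b / n)\<^sup>2 + (a / n)\<^sup>2 = (a\<^sup>2 + b\<^sup>2) / n\<^sup>2"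
    by (simp add: power_divide add_divide_distrib)
  also have "\<dots> = 1"
    using \<open>0 < n\<close> by (simp add: n2)
  finally obtain \<phi> where \<phi>: "0 \<le> \<phi>" "\<phi> < 2 * pi" "- b / n = cos \<phi>" "a / n = sin \<phi>"
    by (rule sincos_total_2pi)
  then have proj_\<phi>: "proj \<phi> w = 0"
    by (simp add: proj_def w flip: \<phi>(3,4))
  show ?thesis
  proof (cases "\<phi> \<le> pi")
    case True
    with \<phi>(1) proj_\<phi> that show ?thesis by blast
  next
    case False
    have "proj (\<phi> - pi) w = - proj \<phi> w"
      by (simp add: proj_def cos_diff sin_diff)
    with \<phi>(2) False proj_\<phi> that[of "\<phi> - pi"] show ?thesis by simp
  qed
qed

lemma dist_angle_le: "dist ((cos a, sin a) :: pt) (cos b, sin b) \<le> \<bar>a - b\<bar>"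
proof -
  have "(dist ((cos a, sin a) :: pt) (cos b, sin b))\<^sup>2 = (cos a - cos b)\<^sup>2 + (sin a - sin b)\<^sup>2"
    by (simp add: dist_norm norm_Pair)
  also have "\<dots> = 2 - 2 * cos (a - b)"
    using sin_cos_squared_add[of a] sin_cos_squared_add[of b]
    by (simp add: cos_diff power2_eq_square algebra_simps)
  also have "\<dots> = (2 * sin ((a - b) / 2))\<^sup>2"
  proof -
    have "cos (a - b) = 1 - 2 * (sin ((a - b) / 2))\<^sup>2"
      using cos_double_sin[of "(a - b) / 2"] by (metis times_divide_eq_right nonzero_mult_div_cancel_left zero_neq_numeral)
    then show ?thesis by (simp add: power_mult_distrib)
  qed
  also have "\<dots> \<le> (a - b)\<^sup>2"
  proof -
    have "\<bar>2 * sin ((a - b) / 2)\<bar> \<le> \<bar>a - b\<bar>"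
      using abs_sin_x_le_abs_x[of "(a - b) / 2"] by (simp add: abs_mult)
    then show ?thesis
      by (simp only: abs_le_square_iff)
  qed
  finally show ?thesis
    by (simp add: abs_le_square_iff[symmetric])
qed

lemma ecard_minus_one_ge:
  assumes "x \<in> S" "y \<in> S" "x \<noteq> y"
  shows "1 \<le> ecard S - 1"
proof (cases "finite S")
  case True
  have "card {x, y} \<le> card S"
    using assms True by (intro card_mono) auto
  then have "2 \<le> real (card S)"
    using assms(3) by simp
  moreover have "ecard S - 1 = ennreal (real (card S) - 1)"
    using True by (simp add: ecard_def ennreal_minus[symmetric])
  ultimately show ?thesis
    by simp
qed (simp add: ecard_def)

lemma lines_meeting2_count_ge:
  assumes "lne \<in> lines_meeting2 G H" "G \<subseteq> E" "H \<subseteq> E" "G \<inter> H = {}"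
  shows "1 \<le> indicator (lines_meeting E) lne * (ecard (E \<inter> lne) - 1)"
proof -
  obtain x y where "affine_line lne" and x: "x \<in> G" "x \<in> lne" and y: "y \<in> H" "y \<in> lne"
    using assms(1) by (auto simp: lines_meeting2_def)
  then have "lne \<in> lines_meeting E"
    using assms(2) by (auto simp: lines_meeting_def)
  moreover have "1 \<le> ecard (E \<inter> lne) - 1"
    using x y assms(2-4) by (intro ecard_minus_one_ge[of x _ y]) auto
  ultimately show ?thesis
    by simp
qed

lemma eta_lines_meeting2_le_eta_integral:
  assumes "compact G" "compact H" "G \<subseteq> E" "H \<subseteq> E" "G \<inter> H = {}"
  shows "eta (lines_meeting2 G H)
    \<le> eta_integral (\<lambda>lne. indicator (lines_meeting E) lne * (ecard (E \<inter> lne) - 1))"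
  unfolding eta_def eta_integral_def
proof (intro nn_integral_mono mult_right_mono)
  fix \<theta> :: real
  have "compact (proj \<theta> ` G \<inter> proj \<theta> ` H)"
    using assms(1,2) by (intro compact_Int compact_continuous_image continuous_intros)
  then have S: "{t. line_of \<theta> t \<in> lines_meeting2 G H} \<in> sets borel"
    unfolding lines_meeting2_line_of by (simp add: borel_compact)
  have "emeasure lebesgue {t. line_of \<theta> t \<in> lines_meeting2 G H}
      = (\<integral>\<^sup>+t. indicator {t. line_of \<theta> t \<in> lines_meeting2 G H} t \<partial>lborel)"
    using S by simp
  also have "\<dots> \<le> (\<integral>\<^sup>+t. indicator (lines_meeting E) (line_of \<theta> t) * (ecard (E \<inter> line_of \<theta> t) - 1) \<partial>lborel)"
  proof (rule nn_integral_mono)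
    fix t
    show "indicator {t. line_of \<theta> t \<in> lines_meeting2 G H} t
      \<le> indicator (lines_meeting E) (line_of \<theta> t) * (ecard (E \<inter> line_of \<theta> t) - 1)"
      using lines_meeting2_count_ge[OF _ assms(3-5), of "line_of \<theta> t"]
      by (cases "line_of \<theta> t \<in> lines_meeting2 G H") simp_all
  qed
  finally show "emeasure lebesgue {t. line_of \<theta> t \<in> lines_meeting2 G H}
      \<le> (\<integral>\<^sup>+t. indicator (lines_meeting E) (line_of \<theta> t) * (ecard (E \<inter> line_of \<theta> t) - 1) \<partial>lborel)" .
qed simp

section \<open>Two transversal Lipschitz graphs\<close>

text \<open>The parameter \<open>r\<close> stands for \<open>sqrt \<alpha>\<close>.\<close>

locale transversal_graphs =
  K: lipschitz_graph uk vk pk Ak fk \<beta> + L: lipschitz_graph ul vl pl Al fl \<beta>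
  for uk vk pk Ak fk ul vl pl Al fl \<beta> +
  fixes r :: real and Gk Gl :: "pt set"
  assumes r_pos: "0 < r" and slope: "\<beta> \<le> r / 8"
    and compact_Gk: "compact Gk" and compact_Gl: "compact Gl"
    and Gk_graph: "Gk \<subseteq> K.graph" and Gl_graph: "Gl \<subseteq> L.graph"
    and Gk_ball: "Gk \<subseteq> cball 0 1" and Gl_ball: "Gl \<subseteq> cball 0 1"
    and Gk_near: "\<And>x. x \<in> Gk \<Longrightarrow> \<bar>inner (x - pk) vk\<bar> \<le> r / 2"
    and Gk_far: "\<And>x. x \<in> Gk \<Longrightarrow> r < \<bar>inner (x - pl) vl\<bar>"
    and Gl_near: "\<And>y. y \<in> Gl \<Longrightarrow> \<bar>inner (y - pl) vl\<bar> \<le> r / 2"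
    and Gl_far: "\<And>y. y \<in> Gl \<Longrightarrow> r < \<bar>inner (y - pk) vk\<bar>"
begin

lemma Gk_Gl_disjoint: "Gk \<inter> Gl = {}"
  using Gk_far Gl_near r_pos by force

lemma norm_diff_le_2:
  assumes "x \<in> Gk" "y \<in> Gl"
  shows "norm (x - y) \<le> 2"
proof -
  have "norm x \<le> 1" "norm y \<le> 1"
    using assms Gk_ball Gl_ball by auto
  then show ?thesis
    using norm_triangle_ineq4[of x y] by linarith
qed

lemma transversal_k:
  assumes "x \<in> Gk" "y \<in> Gl" "proj \<theta> x = proj \<theta> y"
  shows "r / 4 \<le> \<bar>inner (cos \<theta>, sin \<theta>) uk\<bar>"
proof (rule K.transversal[OF Gl_far[OF assms(2)] Gk_near[OF assms(1)]])
  show "norm (x - y) \<le> 2" by (rule norm_diff_le_2[OF assms(1,2)])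
  show "inner (cos \<theta>, sin \<theta>) (x - y) = 0"
    using assms(3) by (simp add: proj_eq_inner inner_diff_right)
qed (rule norm_cos_sin)

lemma transversal_l:
  assumes "x \<in> Gk" "y \<in> Gl" "proj \<theta> x = proj \<theta> y"
  shows "r / 4 \<le> \<bar>inner (cos \<theta>, sin \<theta>) ul\<bar>"
proof (rule L.transversal[OF Gk_far[OF assms(1)] Gl_near[OF assms(2)]])
  show "norm (y - x) \<le> 2"
    using norm_diff_le_2[OF assms(1,2)] by (simp add: norm_minus_commute)
  show "inner (cos \<theta>, sin \<theta>) (y - x) = 0"
    using assms(3) by (simp add: proj_eq_inner inner_diff_right)
qed (rule norm_cos_sin)

definition incidences :: "(real \<times> real) set" where
  "incidences = {(\<theta>, K.coord x) | \<theta> x y. \<theta> \<in> {0..pi} \<and> x \<in> Gk \<and> y \<in> Gl \<and> proj \<theta> x = proj \<theta> y}"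

lemma compact_incidences: "compact incidences"
proof -
  define Z where "Z = ({0..pi} \<times> (Gk \<times> Gl)) \<inter> {z. proj (fst z) (fst (snd z)) = proj (fst z) (snd (snd z))}"
  have "compact Z"
    unfolding Z_def
    by (intro compact_Int_closed compact_Times compact_Icc compact_Gk compact_Gl closed_Collect_eq
        continuous_on_proj continuous_intros)
  moreover have "incidences = (\<lambda>z. (fst z, K.coord (fst (snd z)))) ` Z"
    by (force simp: incidences_def Z_def image_iff)
  ultimately show ?thesis
    unfolding K.coord_def by (auto intro!: compact_continuous_image continuous_intros)
qed

lemma emeasure_angle_section_le:
  "emeasure lborel {s. (\<theta>, s) \<in> incidences} \<le> ennreal (16 / r) * emeasure lborel (proj \<theta> ` Gk \<inter> proj \<theta> ` Gl)"
proof -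
  define X where "X = fst ` (Gk \<times> Gl \<inter> {z. proj \<theta> (fst z) = proj \<theta> (snd z)})"
  have X: "x \<in> X \<longleftrightarrow> x \<in> Gk \<and> (\<exists>y\<in>Gl. proj \<theta> x = proj \<theta> y)" for x
    by (force simp: X_def)
  have cont_proj: "continuous_on S (proj \<theta>)" for S
    by (intro continuous_on_proj continuous_intros)
  have "compact X"
    unfolding X_def
    by (intro compact_continuous_image compact_Int_closed compact_Times compact_Gk compact_Gl
        closed_Collect_eq continuous_on_proj continuous_intros)
  have "{s. (\<theta>, s) \<in> incidences} \<subseteq> K.coord ` X"
    by (auto simp: incidences_def X intro!: imageI)
  then have "emeasure lborel {s. (\<theta>, s) \<in> incidences} \<le> emeasure lborel (K.coord ` X)"
    using \<open>compact X\<close>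
    by (intro emeasure_mono) (auto intro!: borel_compact compact_continuous_image K.continuous_on_coord)
  also have "\<dots> \<le> ennreal (2 * (8 / r)) * emeasure lborel (proj \<theta> ` X)"
  proof (rule emeasure_image_le)
    show "compact (proj \<theta> ` X)"
      by (rule compact_continuous_image[OF cont_proj \<open>compact X\<close>])
    show "0 \<le> 8 / r"
      using r_pos by simp
    fix x x' assume "x \<in> X" "x' \<in> X"
    then obtain y where x: "x \<in> Gk" "x' \<in> Gk" and y: "y \<in> Gl" "proj \<theta> x = proj \<theta> y"
      by (auto simp: X)
    then have "\<bar>K.coord x - K.coord x'\<bar> \<le> 8 / r * \<bar>inner (cos \<theta>, sin \<theta>) (x - x')\<bar>"
      using K.coord_diff_le[OF _ _ norm_cos_sin transversal_k[OF x(1) y] r_pos slope] Gk_graph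
      by blast
    then show "\<bar>K.coord x - K.coord x'\<bar> \<le> 8 / r * \<bar>proj \<theta> x - proj \<theta> x'\<bar>"
      by (simp add: proj_eq_inner inner_diff_right)
  qed
  also have "\<dots> \<le> ennreal (16 / r) * emeasure lborel (proj \<theta> ` Gk \<inter> proj \<theta> ` Gl)"
  proof (intro mult_mono emeasure_mono)
    show "proj \<theta> ` X \<subseteq> proj \<theta> ` Gk \<inter> proj \<theta> ` Gl"
      by (force simp: X)
    show "proj \<theta> ` Gk \<inter> proj \<theta> ` Gl \<in> sets lborel"
      by (auto intro!: borel_compact compact_Int compact_continuous_image cont_proj compact_Gk compact_Gl)
  qed auto
  finally show ?thesis .
qed

lemma coord_diff_le_angle:
  assumes x0: "x0 \<in> Gk" and y: "y1 \<in> Gl" "y2 \<in> Gl"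
    and on_line: "proj \<theta>1 x0 = proj \<theta>1 y1" "proj \<theta>2 x0 = proj \<theta>2 y2"
  shows "\<bar>L.coord y1 - L.coord y2\<bar> \<le> 16 / r * \<bar>\<theta>1 - \<theta>2\<bar>"
proof -
  define e1 e2 :: pt where "e1 = (cos \<theta>1, sin \<theta>1)" and "e2 = (cos \<theta>2, sin \<theta>2)"
  have "\<bar>L.coord y1 - L.coord y2\<bar> \<le> 8 / r * \<bar>inner e2 (y1 - y2)\<bar>"
    using L.coord_diff_le[OF _ _ norm_cos_sin transversal_l[OF x0 y(2) on_line(2)] r_pos slope]
      Gl_graph y unfolding e2_def by blast
  also have "inner e2 (y1 - y2) = inner (e2 - e1) (y1 - x0)"
  proof -
    have "inner e1 x0 = inner e1 y1" "inner e2 x0 = inner e2 y2"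
      using on_line by (simp_all add: e1_def e2_def proj_eq_inner)
    then show ?thesis
      by (simp add: inner_diff_left inner_diff_right)
  qed
  also have "8 / r * \<bar>inner (e2 - e1) (y1 - x0)\<bar> \<le> 8 / r * (\<bar>\<theta>1 - \<theta>2\<bar> * 2)"
  proof (intro mult_left_mono)
    have "\<bar>inner (e2 - e1) (y1 - x0)\<bar> \<le> norm (e2 - e1) * norm (y1 - x0)"
      by (rule Cauchy_Schwarz_ineq2)
    also have "\<dots> \<le> \<bar>\<theta>1 - \<theta>2\<bar> * 2"
      using dist_angle_le[of \<theta>2 \<theta>1] norm_diff_le_2[OF x0 y(1)]
      by (intro mult_mono) (auto simp: e1_def e2_def dist_norm norm_minus_commute abs_minus_commute)
    finally show "\<bar>inner (e2 - e1) (y1 - x0)\<bar> \<le> \<bar>\<theta>1 - \<theta>2\<bar> * 2" .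
  qed (use r_pos in simp)
  finally show ?thesis
    by simp
qed

definition angles_through :: "pt \<Rightarrow> (real \<times> pt) set" where
  "angles_through x0 = {(\<theta>, y). \<theta> \<in> {0..pi} \<and> y \<in> Gl \<and> proj \<theta> x0 = proj \<theta> y}"

lemma compact_angles_through: "compact (angles_through x0)"
proof -
  have eq: "angles_through x0 = ({0..pi} \<times> Gl) \<inter> {z. proj (fst z) x0 = proj (fst z) (snd z)}"
    by (auto simp: angles_through_def)
  show ?thesis
    unfolding eq
    by (intro compact_Int_closed compact_Times compact_Icc compact_Gl closed_Collect_eq continuous_intros)
qed

lemma Gl_subset_angles_through:
  assumes x0: "x0 \<in> Gk"
  shows "Gl \<subseteq> snd ` angles_through x0"
proof
  fix y assume y: "y \<in> Gl"
  then have "y - x0 \<noteq> 0"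
    using Gk_Gl_disjoint x0 by auto
  then obtain \<theta> where "0 \<le> \<theta>" "\<theta> \<le> pi" "proj \<theta> (y - x0) = 0"
    by (rule exists_angle_proj_eq_0)
  then have "(\<theta>, y) \<in> angles_through x0"
    using y by (simp add: angles_through_def proj_def algebra_simps)
  then show "y \<in> snd ` angles_through x0"
    by force
qed

lemma angles_through_subset_section:
  assumes x0: "x0 \<in> Gk"
  shows "fst ` angles_through x0 \<subseteq> {\<theta>. (\<theta>, K.coord x0) \<in> incidences}"
proof
  fix \<theta> assume "\<theta> \<in> fst ` angles_through x0"
  then obtain y where "\<theta> \<in> {0..pi}" "y \<in> Gl" "proj \<theta> x0 = proj \<theta> y"
    by (auto simp: angles_through_def)
  then show "\<theta> \<in> {\<theta>. (\<theta>, K.coord x0) \<in> incidences}"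
    using x0 unfolding incidences_def by blast
qed

lemma closed_coord_section: "closed {\<theta>. (\<theta>, s) \<in> incidences}"
proof -
  have "closed ((\<lambda>\<theta>. (\<theta>, s)) -` incidences)"
    by (intro continuous_closed_vimage compact_imp_closed compact_incidences continuous_intros)
  then show ?thesis
    by (simp add: vimage_def)
qed

lemma emeasure_coord_section_ge:
  assumes x0: "x0 \<in> Gk"
  shows "ennreal (r / 32) * emeasure lborel (L.coord ` Gl)
    \<le> emeasure lborel {\<theta>. (\<theta>, K.coord x0) \<in> incidences}"
proof -
  let ?Y = "angles_through x0"
  have "L.coord ` Gl \<subseteq> (L.coord \<circ> snd) ` ?Y"
    unfolding image_comp[symmetric] by (rule image_mono[OF Gl_subset_angles_through[OF x0]])
  moreover have "compact ((L.coord \<circ> snd) ` ?Y)"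
    using compact_angles_through[of x0] unfolding L.coord_def o_def
    by (intro compact_continuous_image continuous_intros)
  ultimately have "emeasure lborel (L.coord ` Gl) \<le> emeasure lborel ((L.coord \<circ> snd) ` ?Y)"
    by (intro emeasure_mono) (auto intro: borel_compact)
  also have "\<dots> \<le> ennreal (2 * (16 / r)) * emeasure lborel (fst ` ?Y)"
  proof (rule emeasure_image_le)
    show "compact (fst ` ?Y)"
      using compact_angles_through[of x0] by (intro compact_continuous_image continuous_intros)
    show "0 \<le> 16 / r"
      using r_pos by simp
    fix z z' assume "z \<in> ?Y" "z' \<in> ?Y"
    then show "\<bar>(L.coord \<circ> snd) z - (L.coord \<circ> snd) z'\<bar> \<le> 16 / r * \<bar>fst z - fst z'\<bar>"
      using coord_diff_le_angle[OF x0] by (auto simp: angles_through_def)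
  qed
  also have "\<dots> \<le> ennreal (32 / r) * emeasure lborel {\<theta>. (\<theta>, K.coord x0) \<in> incidences}"
    using angles_through_subset_section[OF x0] closed_coord_section
    by (intro mult_mono emeasure_mono) (auto simp: borel_closed)
  finally have "ennreal (r / 32) * emeasure lborel (L.coord ` Gl)
      \<le> ennreal (r / 32) * (ennreal (32 / r) * emeasure lborel {\<theta>. (\<theta>, K.coord x0) \<in> incidences})"
    by (intro mult_left_mono) auto
  then show ?thesis
    using r_pos by (simp add: mult.assoc[symmetric] ennreal_mult[symmetric])
qed

text \<open>The incidence set uses the closed interval \<open>{0..pi}\<close> to be compact, whereas \<open>eta\<close>
  integrates over \<open>{0..<pi}\<close>; the angle \<open>pi\<close> is a null set.\<close>

lemma emeasure_angle_section_le_integrand: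
  assumes "\<theta> \<noteq> pi"
  shows "ennreal (r / 16) * emeasure lborel {s. (\<theta>, s) \<in> incidences}
    \<le> emeasure lebesgue {t. line_of \<theta> t \<in> lines_meeting2 Gk Gl} * indicator {0..<pi} \<theta>"
proof (cases "\<theta> \<in> {0..<pi}")
  case True
  have cont_proj: "continuous_on S (proj \<theta>)" for S
    by (intro continuous_intros)
  have borel: "proj \<theta> ` Gk \<inter> proj \<theta> ` Gl \<in> sets borel"
    by (auto intro!: borel_compact compact_Int compact_continuous_image cont_proj compact_Gk compact_Gl)
  have "ennreal (r / 16) * emeasure lborel {s. (\<theta>, s) \<in> incidences}
      \<le> ennreal (r / 16) * (ennreal (16 / r) * emeasure lborel (proj \<theta> ` Gk \<inter> proj \<theta> ` Gl))"
    by (intro mult_left_mono emeasure_angle_section_le) auto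
  also have "\<dots> = emeasure lebesgue {t. line_of \<theta> t \<in> lines_meeting2 Gk Gl}"
    using r_pos borel by (simp add: lines_meeting2_line_of mult.assoc[symmetric] ennreal_mult[symmetric])
  finally show ?thesis
    using True by simp
next
  case False
  then have "{s. (\<theta>, s) \<in> incidences} = {}"
    using assms by (auto simp: incidences_def)
  then show ?thesis by simp
qed

lemma eta_lines_meeting2_ge:
  "ennreal (r\<^sup>2 / 512) * emeasure lborel (K.coord ` Gk) * emeasure lborel (L.coord ` Gl)
    \<le> eta (lines_meeting2 Gk Gl)"
proof -
  have "ennreal (r / 16) * (ennreal (r / 32) * emeasure lborel (L.coord ` Gl)) * emeasure lborel (K.coord ` Gk)
      \<le> (\<integral>\<^sup>+\<theta>. emeasure lebesgue {t. line_of \<theta> t \<in> lines_meeting2 Gk Gl} * indicator {0..<pi} \<theta> \<partial>lborel)"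
  proof (rule emeasure_sections_bound)
    show "incidences \<in> sets borel"
      using compact_incidences by (rule borel_compact)
    show "K.coord ` Gk \<in> sets borel"
      by (intro borel_compact compact_continuous_image K.continuous_on_coord compact_Gk)
    show "ennreal (r / 32) * emeasure lborel (L.coord ` Gl) \<le> emeasure lborel {\<theta>. (\<theta>, s) \<in> incidences}"
      if "s \<in> K.coord ` Gk" for s
      using that emeasure_coord_section_ge by auto
    show "AE \<theta> in lborel. ennreal (r / 16) * emeasure lborel {s. (\<theta>, s) \<in> incidences}
        \<le> emeasure lebesgue {t. line_of \<theta> t \<in> lines_meeting2 Gk Gl} * indicator {0..<pi} \<theta>"
      using AE_lborel_singleton[of pi] by eventually_elim (rule emeasure_angle_section_le_integrand)
  qed
  also have "\<dots> = eta (lines_meeting2 Gk Gl)"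
    by (simp add: eta_def)
  finally show ?thesis
    using r_pos by (simp add: ennreal_mult[symmetric] power2_eq_square mult_ac)
qed

lemma eta_lines_meeting2_ge_hausdorff1:
  assumes "\<beta> \<le> 1" "0 \<le> a" "ennreal a \<le> hausdorff1 Gk" "ennreal a \<le> hausdorff1 Gl"
  shows "ennreal (r\<^sup>2 * a\<^sup>2 / 2048) \<le> eta (lines_meeting2 Gk Gl)"
proof -
  define mk ml where "mk = measure lborel (K.coord ` Gk)" and "ml = measure lborel (L.coord ` Gl)"
  have "a / 2 \<le> mk" "a / 2 \<le> ml"
    unfolding mk_def ml_def
    using K.measure_coord_ge[OF compact_Gk Gk_graph assms(1,3)]
      L.measure_coord_ge[OF compact_Gl Gl_graph assms(1,4)] .
  have "r\<^sup>2 * a\<^sup>2 / 2048 = r\<^sup>2 / 512 * (a / 2) * (a / 2)"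
    by (simp add: power2_eq_square)
  also have "\<dots> \<le> r\<^sup>2 / 512 * mk * ml"
    using \<open>a / 2 \<le> mk\<close> \<open>a / 2 \<le> ml\<close> assms(2) by (intro mult_mono mult_left_mono) auto
  finally have "ennreal (r\<^sup>2 * a\<^sup>2 / 2048) \<le> ennreal (r\<^sup>2 / 512) * ennreal mk * ennreal ml"
    by (simp add: ennreal_leI ennreal_mult[symmetric] mk_def ml_def)
  also have "\<dots> \<le> eta (lines_meeting2 Gk Gl)"
    using eta_lines_meeting2_ge
    by (simp add: mk_def ml_def K.emeasure_coord_eq[OF compact_Gk] L.emeasure_coord_eq[OF compact_Gl])
  finally show ?thesis .
qed

end

section \<open>The estimate for small \<open>\<alpha>\<close>\<close>

lemma lip_graphE:
  assumes "lip_graph \<beta> lne \<gamma>"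
  obtains u v p A f where "lipschitz_graph u v A f \<beta>" "lne = {p + s *\<^sub>R u | s. True}"
    "\<gamma> = lipschitz_graph.graph u v p A f"
proof -
  obtain p u v A f where "norm u = 1" "norm v = 1" "inner u v = 0" "lipschitz_on \<beta> A f"
    and "lne = {p + s *\<^sub>R u | s. True}" "\<gamma> = {p + t *\<^sub>R u + f t *\<^sub>R v | t. t \<in> A}"
    using assms unfolding lip_graph_def by blast
  then show thesis
    by (intro that[of u v A f p]) (simp_all add: lipschitz_graph_def lipschitz_graph_axioms_def
        orthonormal_frame_def lipschitz_graph.graph_def)
qed

lemma nbhd_mono:
  assumes "w \<le> w'"
  shows "nbhd lne w \<subseteq> nbhd lne w'"
proof
  fix x assume "x \<in> nbhd lne w"
  then obtain y where "y \<in> lne" "dist x y \<le> w"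
    by (auto simp: nbhd_def)
  then show "x \<in> nbhd lne w'"
    using assms unfolding nbhd_def by (intro CollectI bexI[of _ y]) auto
qed

lemma small_alpha_bounds:
  fixes C Clip \<alpha> :: real
  assumes "1 \<le> C" "1 \<le> Clip" "0 < \<alpha>" "\<alpha> < (1 / (8 * (C + Clip)))\<^sup>2"
  shows "C * \<alpha> \<le> sqrt \<alpha> / 2" "Clip * \<alpha> \<le> sqrt \<alpha> / 8" "Clip * \<alpha> \<le> 1"
proof -
  define r where "r = sqrt \<alpha>"
  have r: "0 < r" "\<alpha> = r * r"
    using assms(3) by (simp_all add: r_def)
  have "r < 1 / (8 * (C + Clip))"
    using real_sqrt_less_mono[OF assms(4)] assms(1,2) by (simp add: r_def)
  then have "8 * (C + Clip) * r < 1"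
    using assms(1,2) by (simp add: field_simps)
  then have "8 * (C * r) + 8 * (Clip * r) < 1"
    by (simp add: algebra_simps)
  moreover have "0 \<le> C * r" "0 \<le> Clip * r" "r \<le> C * r"
    using assms(1,2) r(1) by simp_all
  ultimately have Cr: "C * r \<le> 1 / 8" and Clipr: "Clip * r \<le> 1 / 8" and "r \<le> 1 / 8"
    by linarith+
  have "C * \<alpha> = (C * r) * r" "Clip * \<alpha> = (Clip * r) * r"
    using r(2) by simp_all
  moreover have "(C * r) * r \<le> 1 / 8 * r" "(Clip * r) * r \<le> 1 / 8 * r"
    using Cr Clipr r(1) by (simp_all add: mult_right_mono)
  ultimately show "C * \<alpha> \<le> sqrt \<alpha> / 2" "Clip * \<alpha> \<le> sqrt \<alpha> / 8" "Clip * \<alpha> \<le> 1"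
    using r(1) \<open>r \<le> 1 / 8\<close> unfolding r_def[symmetric] by linarith+
qed

lemma eta_lines_meeting2_ge_alpha:
  fixes C Clip \<alpha> :: real
  assumes C: "1 \<le> C" and \<alpha>: "0 < \<alpha>"
    and small: "C * \<alpha> \<le> sqrt \<alpha> / 2" "Clip * \<alpha> \<le> sqrt \<alpha> / 8" "Clip * \<alpha> \<le> 1"
    and graphs: "lip_graph (Clip * \<alpha>) lk \<gamma>k" "lip_graph (Clip * \<alpha>) ll \<gamma>l"
    and tubes: "\<gamma>k \<inter> cball 0 1 \<subseteq> nbhd lk (C * \<alpha>)" "\<gamma>l \<inter> cball 0 1 \<subseteq> nbhd ll (C * \<alpha>)"
    and compact: "compact Gk" "compact Gl"
    and Gk: "Gk \<subseteq> \<gamma>k - nbhd ll (sqrt \<alpha>)" "Gk \<subseteq> cball 0 1"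
    and Gl: "Gl \<subseteq> \<gamma>l - nbhd lk (sqrt \<alpha>)" "Gl \<subseteq> cball 0 1"
    and H: "ennreal (\<alpha> ^ 3 / C) \<le> hausdorff1 Gk" "ennreal (\<alpha> ^ 3 / C) \<le> hausdorff1 Gl"
  shows "ennreal (\<alpha> ^ 7 / (2048 * C\<^sup>2)) \<le> eta (lines_meeting2 Gk Gl)"
proof -
  obtain uk vk pk Ak fk where K: "lipschitz_graph uk vk Ak fk (Clip * \<alpha>)"
    and lk: "lk = {pk + s *\<^sub>R uk | s. True}" and \<gamma>k: "\<gamma>k = lipschitz_graph.graph uk vk pk Ak fk"
    using graphs(1) by (rule lip_graphE)
  obtain ul vl pl Al fl where L: "lipschitz_graph ul vl Al fl (Clip * \<alpha>)"
    and ll: "ll = {pl + s *\<^sub>R ul | s. True}" and \<gamma>l: "\<gamma>l = lipschitz_graph.graph ul vl pl Al fl"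
    using graphs(2) by (rule lip_graphE)
  interpret K: lipschitz_graph uk vk pk Ak fk "Clip * \<alpha>" by (rule K)
  interpret L: lipschitz_graph ul vl pl Al fl "Clip * \<alpha>" by (rule L)
  interpret transversal_graphs uk vk pk Ak fk ul vl pl Al fl "Clip * \<alpha>" "sqrt \<alpha>" Gk Gl
  proof unfold_locales
    fix x assume "x \<in> Gk"
    then have "x \<in> nbhd lk (C * \<alpha>)" "x \<notin> nbhd ll (sqrt \<alpha>)"
      using Gk tubes(1) by (auto simp: \<gamma>k)
    then have "\<bar>inner (x - pk) vk\<bar> \<le> C * \<alpha>" "\<not> \<bar>inner (x - pl) vl\<bar> \<le> sqrt \<alpha>"
      unfolding K.mem_nbhd_line_iff[OF lk] L.mem_nbhd_line_iff[OF ll] .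
    then show "\<bar>inner (x - pk) vk\<bar> \<le> sqrt \<alpha> / 2" "sqrt \<alpha> < \<bar>inner (x - pl) vl\<bar>"
      using small(1) by linarith+
  next
    fix y assume "y \<in> Gl"
    then have "y \<in> nbhd ll (C * \<alpha>)" "y \<notin> nbhd lk (sqrt \<alpha>)"
      using Gl tubes(2) by (auto simp: \<gamma>l)
    then have "\<bar>inner (y - pl) vl\<bar> \<le> C * \<alpha>" "\<not> \<bar>inner (y - pk) vk\<bar> \<le> sqrt \<alpha>"
      unfolding K.mem_nbhd_line_iff[OF lk] L.mem_nbhd_line_iff[OF ll] .
    then show "\<bar>inner (y - pl) vl\<bar> \<le> sqrt \<alpha> / 2" "sqrt \<alpha> < \<bar>inner (y - pk) vk\<bar>"
      using small(1) by linarith+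
  qed (use \<alpha> small compact Gk Gl in \<open>auto simp: \<gamma>k \<gamma>l\<close>)
  have "ennreal (\<alpha> ^ 7 / (2048 * C\<^sup>2)) = ennreal ((sqrt \<alpha>)\<^sup>2 * (\<alpha> ^ 3 / C)\<^sup>2 / 2048)"
    using \<alpha> by (simp add: power_divide field_simps eval_nat_numeral)
  also have "\<dots> \<le> eta (lines_meeting2 Gk Gl)"
    using \<alpha> C small(3) H by (intro eta_lines_meeting2_ge_hausdorff1) auto
  finally show ?thesis .
qed

lemma eta_bounds_small_alpha:
  fixes C Clip \<alpha> :: real
  assumes "1 \<le> C" "1 \<le> Clip" and \<alpha>: "0 < \<alpha>" "\<alpha> < (1 / (8 * (C + Clip)))\<^sup>2"
    and hyps: "lip_graph (Clip * \<alpha>) lk \<gamma>k" "lip_graph (Clip * \<alpha>) ll \<gamma>l"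
      "\<gamma>k \<inter> cball 0 1 \<subseteq> nbhd lk (C * \<alpha>)" "\<gamma>l \<inter> cball 0 1 \<subseteq> nbhd ll (C * \<alpha>)"
      "compact Gk" "compact Gl"
      "Gk \<subseteq> (E \<inter> \<gamma>k) - nbhd ll (sqrt \<alpha>)" "(E \<inter> \<gamma>k) - nbhd ll (sqrt \<alpha>) \<subseteq> cball 0 1"
      "Gl \<subseteq> (E \<inter> \<gamma>l) - nbhd lk (sqrt \<alpha>)" "(E \<inter> \<gamma>l) - nbhd lk (sqrt \<alpha>) \<subseteq> cball 0 1"
      "hausdorff1 Gk \<ge> ennreal (\<alpha> ^ 3 / C)" "hausdorff1 Gl \<ge> ennreal (\<alpha> ^ 3 / C)"
  shows "ennreal (1 / (2048 * C\<^sup>2) * \<alpha> ^ 7) \<le> eta (lines_meeting2 Gk Gl)"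
    and "ennreal (1 / (2048 * C\<^sup>2) * \<alpha> ^ 7)
      \<le> eta_integral (\<lambda>lne. indicator (lines_meeting E) lne * (ecard (E \<inter> lne) - 1))"
proof -
  note small = small_alpha_bounds[OF assms(1,2) \<alpha>]
  have Gk: "Gk \<subseteq> \<gamma>k - nbhd ll (sqrt \<alpha>)" "Gk \<subseteq> cball 0 1"
    using hyps(7,8) by blast+
  have Gl: "Gl \<subseteq> \<gamma>l - nbhd lk (sqrt \<alpha>)" "Gl \<subseteq> cball 0 1"
    using hyps(9,10) by blast+
  show eta: "ennreal (1 / (2048 * C\<^sup>2) * \<alpha> ^ 7) \<le> eta (lines_meeting2 Gk Gl)"
    using eta_lines_meeting2_ge_alpha[OF assms(1) \<alpha>(1) small hyps(1-6) Gk Gl hyps(11,12)]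
    by simp
  have "nbhd lk (C * \<alpha>) \<subseteq> nbhd lk (sqrt \<alpha>)"
    using small(1) real_sqrt_ge_zero[OF less_imp_le[OF \<alpha>(1)]] by (intro nbhd_mono) linarith
  then have "Gk \<inter> Gl = {}"
    using hyps(3) Gk Gl by blast
  then have "eta (lines_meeting2 Gk Gl)
      \<le> eta_integral (\<lambda>lne. indicator (lines_meeting E) lne * (ecard (E \<inter> lne) - 1))"
    using hyps(5-9) by (intro eta_lines_meeting2_le_eta_integral) auto
  with eta show "ennreal (1 / (2048 * C\<^sup>2) * \<alpha> ^ 7)
      \<le> eta_integral (\<lambda>lne. indicator (lines_meeting E) lne * (ecard (E \<inter> lne) - 1))"
    by (rule order_trans)
qed

theorem lemma5p2:
  fixes C Clip :: real
  assumes "C \<ge> 1" and "Clip \<ge> 1"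
  shows "\<exists>\<alpha>0 > 0. \<exists>c > 0. \<forall>\<alpha>. 0 < \<alpha> \<and> \<alpha> < \<alpha>0 \<longrightarrow>
    (\<forall>lk ll \<gamma>k \<gamma>l E Gk Gl.
       affine_line lk \<and> affine_line ll \<and>
       lip_graph (Clip * \<alpha>) lk \<gamma>k \<and> lip_graph (Clip * \<alpha>) ll \<gamma>l \<and>
       \<gamma>k \<inter> cball 0 1 \<subseteq> nbhd lk (C * \<alpha>) \<and>
       \<gamma>l \<inter> cball 0 1 \<subseteq> nbhd ll (C * \<alpha>) \<and>
       compact Gk \<and> compact Gl \<and>
       Gk \<subseteq> (E \<inter> \<gamma>k) - nbhd ll (sqrt \<alpha>) \<and> (E \<inter> \<gamma>k) - nbhd ll (sqrt \<alpha>) \<subseteq> cball 0 1 \<and>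
       Gl \<subseteq> (E \<inter> \<gamma>l) - nbhd lk (sqrt \<alpha>) \<and> (E \<inter> \<gamma>l) - nbhd lk (sqrt \<alpha>) \<subseteq> cball 0 1 \<and>
       hausdorff1 Gk \<ge> ennreal (\<alpha> ^ 3 / C) \<and> hausdorff1 Gl \<ge> ennreal (\<alpha> ^ 3 / C)
     \<longrightarrow> eta (lines_meeting2 Gk Gl) \<ge> ennreal (c * \<alpha> ^ 7) \<and>
         eta_integral (\<lambda>lne. indicator (lines_meeting E) lne * (ecard (E \<inter> lne) - 1))
           \<ge> ennreal (c * \<alpha> ^ 7))"
proof (rule exI[of _ "(1 / (8 * (C + Clip)))\<^sup>2"],
    intro conjI exI[of _ "1 / (2048 * C\<^sup>2)"] allI impI; (elim conjE)?)
  show "0 < (1 / (8 * (C + Clip)))\<^sup>2" "0 < 1 / (2048 * C\<^sup>2)"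
    using assms by simp_all
qed (rule eta_bounds_small_alpha[OF assms]; assumption)+

end
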